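(* Let $\mathcal H=(M,n,\mathcal R)$ be a BMS, let $S\subseteq\mathbb R^n$ be a convex set, and let $x_0\in S$. If there exists an $\mathcal H$-closed convex polytope $P$ with $x_0\in P\subseteq S$, then the scheduler has a positional winning strategy from $x_0$ in the schedulability game with safety set $S$; in fact there is a positional strategy under which, against every environment strategy, all visited states lie in $P$ and every chosen time delay is at least a fixed positive constant.
   Context: A multi-mode system is a tuple $\mathcal H=(M,n,\mathcal R)$ with $M$ a finite nonempty set of modes, $n\ge1$ variables, and $\mathcal R:M\to 2^{\mathbb R^n}$ giving nonempty rate sets; it is a BMS if each $\mathcal R(m)$ is a bounded convex polytope. A convex polytope $P\subseteq\mathbb R^n$ is $\mathcal H$-closed if for every vertex $c$ of $P$ there exist a mode $m\in M$ and $\tau>0$ such that $c+t\,r\in P$ for all $r\in\mathcal R(m)$ and all $t\in[0,\tau]$. The schedulability game from $x_0$: in round $i\ge 1$ the scheduler chooses $(m_i,t_i)\in M\times\mathbb R_{>0}$, the environment chooses $r_i\in\mathcal R(m_i)$, and $x_i=x_{i-1}+t_ir_i$. Scheduler strategies map finite histories to timed moves; environment strategies map a finite history and the current timed move $(m,t)$ to a rate in $\mathcal R(m)$; a strategy is positional if it depends only on the last state. A run is $S$-safe if $x_i\in S$ and $x_i+t r_{i+1}\in S$ for all $i\ge0$, $t\in[0,t_{i+1}]$, and non-Zeno if $\sum_it_i=\infty$. A scheduler strategy is winning if every resulting run is $S$-safe and non-Zeno. *)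

theory Defs
  imports "HOL-Analysis.Analysis"
begin

definition multimode :: "'m set \<Rightarrow> ('m \<Rightarrow> (real^'n) set) \<Rightarrow> bool" where
  "multimode M R \<longleftrightarrow> finite M \<and> M \<noteq> {} \<and> (\<forall>m\<in>M. R m \<noteq> {})"

definition BMS :: "'m set \<Rightarrow> ('m \<Rightarrow> (real^'n) set) \<Rightarrow> bool" where
  "BMS M R \<longleftrightarrow> multimode M R \<and> (\<forall>m\<in>M. polytope (R m))"

definition H_closed :: "'m set \<Rightarrow> ('m \<Rightarrow> (real^'n) set) \<Rightarrow> (real^'n) set \<Rightarrow> bool" where
  "H_closed M R P \<longleftrightarrow> polytope P \<and>
     (\<forall>c. c extreme_point_of P \<longrightarrow>
        (\<exists>m\<in>M. \<exists>\<tau>>0. \<forall>r\<in>R m. \<forall>t\<in>{0..\<tau>}. c + t *\<^sub>R r \<in> P))"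

text \<open>A finite history: initial state together with the list of completed rounds
  (m_i, t_i, r_i).\<close>
type_synonym ('m,'n) history = "(real^'n) \<times> ('m \<times> real \<times> (real^'n)) list"

type_synonym ('m,'n) sched_strategy = "('m,'n) history \<Rightarrow> 'm \<times> real"
type_synonym ('m,'n) env_strategy = "('m,'n) history \<Rightarrow> 'm \<times> real \<Rightarrow> real^'n"

definition last_state :: "('m,'n::finite) history \<Rightarrow> real^'n" where
  "last_state h = fst h + sum_list (map (\<lambda>(m,t,r). t *\<^sub>R r) (snd h))"

definition valid_sched :: "'m set \<Rightarrow> ('m,'n::finite) sched_strategy \<Rightarrow> bool" where
  "valid_sched M \<sigma> \<longleftrightarrow> (\<forall>h. fst (\<sigma> h) \<in> M \<and> snd (\<sigma> h) > 0)"

definition valid_env :: "'m set \<Rightarrow> ('m \<Rightarrow> (real^'n) set) \<Rightarrow> ('m,'n::finite) env_strategy \<Rightarrow> bool" where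
  "valid_env M R \<epsilon> \<longleftrightarrow> (\<forall>h m t. m \<in> M \<longrightarrow> \<epsilon> h (m,t) \<in> R m)"

definition positional :: "('m,'n::finite) sched_strategy \<Rightarrow> bool" where
  "positional \<sigma> \<longleftrightarrow> (\<exists>f. \<forall>h. \<sigma> h = f (last_state h))"

primrec rounds :: "('m,'n::finite) sched_strategy \<Rightarrow> ('m,'n) env_strategy \<Rightarrow> real^'n \<Rightarrow> nat
    \<Rightarrow> ('m \<times> real \<times> (real^'n)) list" where
  "rounds \<sigma> \<epsilon> x0 0 = []"
| "rounds \<sigma> \<epsilon> x0 (Suc k) =
     (let h = (x0, rounds \<sigma> \<epsilon> x0 k); (m,t) = \<sigma> h in rounds \<sigma> \<epsilon> x0 k @ [(m, t, \<epsilon> h (m,t))])"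

text \<open>State x_i, delay t_(i+1) and rate r_(i+1) of the run.\<close>
definition state :: "('m,'n::finite) sched_strategy \<Rightarrow> ('m,'n) env_strategy \<Rightarrow> real^'n \<Rightarrow> nat \<Rightarrow> real^'n" where
  "state \<sigma> \<epsilon> x0 i = last_state (x0, rounds \<sigma> \<epsilon> x0 i)"

definition delay :: "('m,'n::finite) sched_strategy \<Rightarrow> ('m,'n) env_strategy \<Rightarrow> real^'n \<Rightarrow> nat \<Rightarrow> real" where
  "delay \<sigma> \<epsilon> x0 i = fst (snd (last (rounds \<sigma> \<epsilon> x0 (Suc i))))"

definition rate :: "('m,'n::finite) sched_strategy \<Rightarrow> ('m,'n) env_strategy \<Rightarrow> real^'n \<Rightarrow> nat \<Rightarrow> real^'n" where
  "rate \<sigma> \<epsilon> x0 i = snd (snd (last (rounds \<sigma> \<epsilon> x0 (Suc i))))"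

definition safe_run :: "(real^'n) set \<Rightarrow> ('m,'n::finite) sched_strategy \<Rightarrow> ('m,'n) env_strategy \<Rightarrow> real^'n \<Rightarrow> bool" where
  "safe_run S \<sigma> \<epsilon> x0 \<longleftrightarrow> (\<forall>i. state \<sigma> \<epsilon> x0 i \<in> S \<and>
      (\<forall>t\<in>{0..delay \<sigma> \<epsilon> x0 i}. state \<sigma> \<epsilon> x0 i + t *\<^sub>R rate \<sigma> \<epsilon> x0 i \<in> S))"

definition non_zeno :: "('m,'n::finite) sched_strategy \<Rightarrow> ('m,'n) env_strategy \<Rightarrow> real^'n \<Rightarrow> bool" where
  "non_zeno \<sigma> \<epsilon> x0 \<longleftrightarrow> filterlim (\<lambda>k. \<Sum>i<k. delay \<sigma> \<epsilon> x0 i) at_top sequentially"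

definition winning :: "'m set \<Rightarrow> ('m \<Rightarrow> (real^'n) set) \<Rightarrow> (real^'n) set \<Rightarrow> real^'n
    \<Rightarrow> ('m,'n) sched_strategy \<Rightarrow> bool" where
  "winning M R S x0 \<sigma> \<longleftrightarrow> valid_sched M \<sigma> \<and>
     (\<forall>\<epsilon>. valid_env M R \<epsilon> \<longrightarrow> safe_run S \<sigma> \<epsilon> x0 \<and> non_zeno \<sigma> \<epsilon> x0)"

end

theory Submission
  imports Defs
begin

text \<open>Write a point x of P = conv V as a convex combination of the vertices; some vertex v
  carries weight at least 1/|V|. Moving v along any rate of its closing mode for a time up to
  its dwell time \<open>\<tau>\<^sub>v\<close> stays in P, and by convexity moves x by the same rate scaled by the weight
  of v. Hence \<open>\<delta> = min \<tau>\<^sub>v / |V|\<close> is a dwell time valid uniformly on P, and the positional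
  strategy that always waits \<open>\<delta>\<close> in such a mode keeps every run, including the flow segments,
  inside P.\<close>

lemma exists_weight_ge_inverse_card:
  fixes u :: "'a \<Rightarrow> real"
  assumes "finite A" and "A \<noteq> {}" and "sum u A = 1"
  shows "\<exists>j\<in>A. 1 / real (card A) \<le> u j"
proof (rule ccontr)
  assume "\<not> ?thesis"
  then have "sum u A < (\<Sum>j\<in>A. 1 / real (card A))"
    using assms by (intro sum_strict_mono) auto
  also have "\<dots> = 1"
    using assms by simp
  finally show False
    using assms by simp
qed

lemma convex_combination_shift_point:
  fixes C :: "'a::real_vector set"
  assumes "convex C" and "finite E" and "E \<subseteq> C"
    and u: "\<forall>i\<in>E. 0 \<le> u i" "sum u E = 1"
    and "j \<in> E" and "j + s *\<^sub>R r \<in> C"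
  shows "(\<Sum>i\<in>E. u i *\<^sub>R i) + (u j * s) *\<^sub>R r \<in> C"
proof -
  define y where "y i = (if i = j then j + s *\<^sub>R r else i)" for i
  have "(\<Sum>i\<in>E. u i *\<^sub>R y i) = (\<Sum>i\<in>E. u i *\<^sub>R i + (if i = j then (u j * s) *\<^sub>R r else 0))"
    by (intro sum.cong) (auto simp: y_def scaleR_add_right)
  also have "\<dots> = (\<Sum>i\<in>E. u i *\<^sub>R i) + (u j * s) *\<^sub>R r"
    using assms by (simp add: sum.distrib)
  moreover have "(\<Sum>i\<in>E. u i *\<^sub>R y i) \<in> C"
    using assms by (intro convex_sum) (auto simp: y_def)
  ultimately show ?thesis
    by simp
qed

lemma convex_hull_uniform_dwell_time:
  fixes E :: "'a::real_vector set" and R :: "'m \<Rightarrow> 'a set"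
  assumes "finite E"
    and "\<forall>c\<in>E. \<exists>m\<in>M. \<exists>\<tau>>0. \<forall>r\<in>R m. \<forall>t\<in>{0..\<tau>}. c + t *\<^sub>R r \<in> convex hull E"
  shows "\<exists>\<delta>>0. \<forall>x\<in>convex hull E. \<exists>m\<in>M. \<forall>r\<in>R m. \<forall>t\<in>{0..\<delta>}. x + t *\<^sub>R r \<in> convex hull E"
proof (cases "E = {}")
  case True
  then show ?thesis by (intro exI[of _ 1]) auto
next
  case False
  obtain mode \<tau> where mode: "\<And>c. c \<in> E \<Longrightarrow> mode c \<in> M \<and> \<tau> c > 0 \<and>
      (\<forall>r\<in>R (mode c). \<forall>t\<in>{0..\<tau> c}. c + t *\<^sub>R r \<in> convex hull E)"
    using assms(2) by metis
  define \<delta> where "\<delta> = Min (\<tau> ` E) / real (card E)"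
  have card_pos: "real (card E) > 0"
    using False \<open>finite E\<close> by (simp add: card_gt_0_iff)
  have "Min (\<tau> ` E) > 0"
    using False \<open>finite E\<close> mode by auto
  then have \<delta>_pos: "\<delta> > 0"
    unfolding \<delta>_def using card_pos by simp
  have "\<exists>m\<in>M. \<forall>r\<in>R m. \<forall>t\<in>{0..\<delta>}. x + t *\<^sub>R r \<in> convex hull E" if "x \<in> convex hull E" for x
  proof -
    obtain u where u: "\<forall>i\<in>E. 0 \<le> u i" "sum u E = 1" "(\<Sum>i\<in>E. u i *\<^sub>R i) = x"
      using \<open>x \<in> convex hull E\<close> convex_hull_finite[OF \<open>finite E\<close>] by blast
    obtain j where j: "j \<in> E" "1 / real (card E) \<le> u j"
      using exists_weight_ge_inverse_card[OF \<open>finite E\<close> False u(2)] by blast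
    have "0 < 1 / real (card E)"
      using card_pos by simp
    with j(2) have uj_pos: "u j > 0"
      by linarith
    have "x + t *\<^sub>R r \<in> convex hull E" if r: "r \<in> R (mode j)" and t: "t \<in> {0..\<delta>}" for r t
    proof -
      have "t / u j \<le> \<delta> * real (card E)"
      proof -
        have "t / u j \<le> \<delta> / u j"
          using t uj_pos by (simp add: divide_right_mono)
        also have "\<dots> \<le> \<delta> / (1 / real (card E))"
          using j uj_pos \<delta>_pos card_pos by (intro divide_left_mono) auto
        finally show ?thesis by simp
      qed
      also have "\<dots> = Min (\<tau> ` E)"
        unfolding \<delta>_def using card_pos by simp
      also have "\<dots> \<le> \<tau> j"
        using \<open>finite E\<close> j by simp
      finally have "j + (t / u j) *\<^sub>R r \<in> convex hull E"
        using mode[OF j(1)] r t uj_pos by auto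
      from convex_combination_shift_point[OF convex_convex_hull \<open>finite E\<close> hull_subset u(1,2) j(1) this]
      show ?thesis
        using u(3) uj_pos by simp
    qed
    then show ?thesis
      using mode[OF j(1)] by blast
  qed
  then show ?thesis
    using \<delta>_pos by blast
qed

lemma H_closed_uniform_dwell_time:
  fixes M :: "'m set" and R :: "'m \<Rightarrow> (real^'n) set" and P :: "(real^'n) set"
  assumes "H_closed M R P"
  shows "\<exists>\<delta>>0. \<forall>x\<in>P. \<exists>m\<in>M. \<forall>r\<in>R m. \<forall>t\<in>{0..\<delta>}. x + t *\<^sub>R r \<in> P"
proof -
  obtain V where "finite V" and P: "P = convex hull V"
    using assms unfolding H_closed_def polytope_def by blast
  define E where "E = {c. c extreme_point_of P}"
  have "finite E"
    using \<open>finite V\<close> extreme_point_of_convex_hull unfolding E_def P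
    by (metis (no_types, lifting) finite_subset mem_Collect_eq subsetI)
  moreover have "P = convex hull E"
    unfolding E_def P using Krein_Milman_polytope[OF \<open>finite V\<close>] .
  moreover have "\<forall>c\<in>E. \<exists>m\<in>M. \<exists>\<tau>>0. \<forall>r\<in>R m. \<forall>t\<in>{0..\<tau>}. c + t *\<^sub>R r \<in> P"
    using assms unfolding H_closed_def E_def by blast
  ultimately show ?thesis
    using convex_hull_uniform_dwell_time[of E M R] by simp
qed

lemma filterlim_sum_at_top_of_ge_pos:
  fixes d :: "nat \<Rightarrow> real"
  assumes "\<delta> > 0" and "\<And>i. \<delta> \<le> d i"
  shows "filterlim (\<lambda>k. \<Sum>i<k. d i) at_top sequentially"
proof (rule filterlim_at_top_mono)
  show "filterlim (\<lambda>k. \<delta> * real k) at_top sequentially"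
    by (rule filterlim_tendsto_pos_mult_at_top[OF tendsto_const \<open>\<delta> > 0\<close> filterlim_real_sequentially])
  show "\<forall>\<^sub>F k in sequentially. \<delta> * real k \<le> (\<Sum>i<k. d i)"
    using sum_bounded_below[of "{..<_}" \<delta> d] assms(2) by (simp add: mult.commute)
qed

lemma last_rounds:
  "last (rounds \<sigma> \<epsilon> x0 (Suc i)) =
     (fst (\<sigma> (x0, rounds \<sigma> \<epsilon> x0 i)), snd (\<sigma> (x0, rounds \<sigma> \<epsilon> x0 i)),
      \<epsilon> (x0, rounds \<sigma> \<epsilon> x0 i) (\<sigma> (x0, rounds \<sigma> \<epsilon> x0 i)))"
  by (simp add: Let_def split: prod.split)

lemma state_0: "state \<sigma> \<epsilon> x0 0 = x0"
  by (simp add: state_def last_state_def)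

lemma state_Suc:
  "state \<sigma> \<epsilon> x0 (Suc i) = state \<sigma> \<epsilon> x0 i + delay \<sigma> \<epsilon> x0 i *\<^sub>R rate \<sigma> \<epsilon> x0 i"
  unfolding state_def delay_def rate_def last_rounds
  by (simp add: Let_def last_state_def split: prod.split)

lemma delay_positional:
  assumes "\<And>h. \<sigma> h = f (last_state h)"
  shows "delay \<sigma> \<epsilon> x0 i = snd (f (state \<sigma> \<epsilon> x0 i))"
  unfolding delay_def last_rounds state_def by (simp add: assms)

lemma rate_positional:
  assumes "\<And>h. \<sigma> h = f (last_state h)" and "valid_env M R \<epsilon>" and "fst (f (state \<sigma> \<epsilon> x0 i)) \<in> M"
  shows "rate \<sigma> \<epsilon> x0 i \<in> R (fst (f (state \<sigma> \<epsilon> x0 i)))"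
  using assms(2,3) unfolding rate_def last_rounds state_def assms(1) valid_env_def
  by (metis prod.collapse snd_conv)

lemma positional_invariant:
  assumes \<sigma>: "\<And>h. \<sigma> h = f (last_state h)" and "valid_env M R \<epsilon>"
    and "\<And>x. fst (f x) \<in> M" and "\<And>x. 0 < snd (f x)" and "x0 \<in> P"
    and P_invariant: "\<And>x. x \<in> P \<Longrightarrow> \<forall>r\<in>R (fst (f x)). \<forall>t\<in>{0..snd (f x)}. x + t *\<^sub>R r \<in> P"
  shows "state \<sigma> \<epsilon> x0 i \<in> P \<and>
    (\<forall>t\<in>{0..delay \<sigma> \<epsilon> x0 i}. state \<sigma> \<epsilon> x0 i + t *\<^sub>R rate \<sigma> \<epsilon> x0 i \<in> P)"
proof -
  have rate_in: "rate \<sigma> \<epsilon> x0 k \<in> R (fst (f (state \<sigma> \<epsilon> x0 k)))" for k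
    using rate_positional[of \<sigma> f, OF \<sigma> \<open>valid_env M R \<epsilon>\<close>] assms(3) .
  have delay_eq: "delay \<sigma> \<epsilon> x0 k = snd (f (state \<sigma> \<epsilon> x0 k))" for k
    by (rule delay_positional[of \<sigma> f, OF \<sigma>])
  have segment: "\<forall>t\<in>{0..delay \<sigma> \<epsilon> x0 k}. state \<sigma> \<epsilon> x0 k + t *\<^sub>R rate \<sigma> \<epsilon> x0 k \<in> P"
    if "state \<sigma> \<epsilon> x0 k \<in> P" for k
    unfolding delay_eq using P_invariant[OF that] rate_in by blast
  have "state \<sigma> \<epsilon> x0 k \<in> P" for k
  proof (induction k)
    case 0
    then show ?case
      using \<open>x0 \<in> P\<close> by (simp add: state_0)
  next
    case (Suc k)
    then show ?case
      using segment[OF Suc] assms(4) by (simp add: state_Suc delay_eq less_imp_le)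
  qed
  then show ?thesis
    using segment by blast
qed

theorem proposition1:
  fixes M :: "'m set" and R :: "'m \<Rightarrow> (real^'n) set"
    and S :: "(real^'n) set" and x0 :: "real^'n" and P :: "(real^'n) set"
  assumes "BMS M R" and "convex S" and "x0 \<in> S"
    and "H_closed M R P" and "x0 \<in> P" and "P \<subseteq> S"
  shows "\<exists>\<sigma>. positional \<sigma> \<and> winning M R S x0 \<sigma> \<and>
             (\<exists>\<delta>>0. \<forall>\<epsilon>. valid_env M R \<epsilon> \<longrightarrow>
                (\<forall>i. state \<sigma> \<epsilon> x0 i \<in> P \<and> delay \<sigma> \<epsilon> x0 i \<ge> \<delta>))"
proof -
  obtain \<delta> where "\<delta> > 0" and "\<forall>x\<in>P. \<exists>m\<in>M. \<forall>r\<in>R m. \<forall>t\<in>{0..\<delta>}. x + t *\<^sub>R r \<in> P"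
    using H_closed_uniform_dwell_time[OF assms(4)] by blast
  then obtain g where g: "\<And>x. x \<in> P \<Longrightarrow> g x \<in> M \<and> (\<forall>r\<in>R (g x). \<forall>t\<in>{0..\<delta>}. x + t *\<^sub>R r \<in> P)"
    by metis
  obtain m0 where "m0 \<in> M"
    using assms(1) unfolding BMS_def multimode_def by blast
  define f where "f x = (if x \<in> P then g x else m0, \<delta>)" for x
  define \<sigma> :: "('m,'n) sched_strategy" where "\<sigma> h = f (last_state h)" for h
  have f_M: "fst (f x) \<in> M" for x
    using g \<open>m0 \<in> M\<close> by (simp add: f_def)
  have run_in_P: "state \<sigma> \<epsilon> x0 i \<in> P \<and> delay \<sigma> \<epsilon> x0 i = \<delta> \<and>
      (\<forall>t\<in>{0..delay \<sigma> \<epsilon> x0 i}. state \<sigma> \<epsilon> x0 i + t *\<^sub>R rate \<sigma> \<epsilon> x0 i \<in> P)"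
    if "valid_env M R \<epsilon>" for \<epsilon> i
    using positional_invariant[of \<sigma> f, OF _ that f_M _ \<open>x0 \<in> P\<close>] g delay_positional[of \<sigma> f]
      \<open>\<delta> > 0\<close> by (simp add: \<sigma>_def f_def)
  have "positional \<sigma>"
    unfolding positional_def \<sigma>_def by blast
  moreover have "valid_sched M \<sigma>"
    unfolding valid_sched_def \<sigma>_def using f_M \<open>\<delta> > 0\<close> by (simp add: f_def)
  moreover have "safe_run S \<sigma> \<epsilon> x0" if "valid_env M R \<epsilon>" for \<epsilon>
    using run_in_P[OF that] \<open>P \<subseteq> S\<close> unfolding safe_run_def by blast
  moreover have "non_zeno \<sigma> \<epsilon> x0" if "valid_env M R \<epsilon>" for \<epsilon>
    unfolding non_zeno_def using run_in_P[OF that]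
    by (intro filterlim_sum_at_top_of_ge_pos[OF \<open>\<delta> > 0\<close>]) simp
  ultimately show ?thesis
    using run_in_P \<open>\<delta> > 0\<close> unfolding winning_def by (intro exI[of _ \<sigma>]) auto
qed

end
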